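(* Let $L$ be a non-degenerate real quadratic form on $\mathbb R^s$ and let $v,w\in Con_L$ with $b_L(v,w)\neq0$. Then the oriented distance between the horoballs $Hb_v$ and $Hb_w$ of $\mathcal P_s(L)$ equals $2\sqrt2\,\ln|b_L(v,w)|$, i.e. $$\inf_{Q\in\mathcal P_s(L),\ Q(w)\le1}\sqrt2\,\ln Q(v)=2\sqrt2\,\ln|b_L(v,w)|.$$
   Context: $b_L$ is the symmetric bilinear form with $L(x)=b_L(x,x)$; $Con_L=\{x:L(x)=0\}$. $\mathcal P_s(L)$ is the set of positive definite quadratic forms $Q$ on $\mathbb R^s$ such that in some basis $Q$ has matrix $\mathrm{Id}_s$ and $L$ has matrix $\mathrm{diag}(1,\dots,1,-1,\dots,-1)$. For nonzero $v\in Con_L$, $f_v(Q)=\sqrt2\ln Q(v)$ is a Busemann function on $\mathcal P_s(L)$ and $Hb_v=\{Q\in\mathcal P_s(L):f_v(Q)\le0\}$; the oriented distance from $Hb_v$ to $Hb_w$ is $\inf_{Q\in Hb_w}f_v(Q)$. *)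

theory Defs
  imports "HOL-Analysis.Analysis"
begin

definition qform :: "real^'n^'n \<Rightarrow> real^'n \<Rightarrow> real" where
  "qform A x = x \<bullet> (A *v x)"

definition bform :: "real^'n^'n \<Rightarrow> real^'n \<Rightarrow> real^'n \<Rightarrow> real" where
  "bform A x y = x \<bullet> (A *v y)"

definition symmetric_mat :: "real^'n^'n \<Rightarrow> bool" where
  "symmetric_mat A \<longleftrightarrow> transpose A = A"

definition nondegenerate_qf :: "real^'n^'n \<Rightarrow> bool" where
  "nondegenerate_qf L \<longleftrightarrow> symmetric_mat L \<and> det L \<noteq> 0"

definition pos_def_qf :: "real^'n^'n \<Rightarrow> bool" where
  "pos_def_qf Q \<longleftrightarrow> symmetric_mat Q \<and> (\<forall>x. x \<noteq> 0 \<longrightarrow> qform Q x > 0)"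

definition Con :: "real^'n^'n \<Rightarrow> (real^'n) set" where
  "Con L = {x. qform L x = 0}"

definition Ps :: "real^'n^'n \<Rightarrow> (real^'n^'n) set" where
  "Ps L = {Q. pos_def_qf Q \<and>
     (\<exists>P::real^'n^'n. invertible P \<and> transpose P ** Q ** P = mat 1 \<and>
        (\<forall>i j. (transpose P ** L ** P) $ i $ j =
                 (if i = j then (transpose P ** L ** P) $ i $ i else 0)) \<and>
        (\<forall>i. (transpose P ** L ** P) $ i $ i \<in> {1, -1}))}"

definition busemann :: "real^'n \<Rightarrow> real^'n^'n \<Rightarrow> real" where
  "busemann v Q = sqrt 2 * ln (qform Q v)"

definition horoball :: "real^'n^'n \<Rightarrow> real^'n \<Rightarrow> (real^'n^'n) set" where
  "horoball L v = {Q \<in> Ps L. busemann v Q \<le> 0}"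

definition oriented_dist :: "real^'n^'n \<Rightarrow> real^'n \<Rightarrow> real^'n \<Rightarrow> real" where
  "oriented_dist L v w = (INF Q\<in>horoball L w. busemann v Q)"

end

theory Submission
  imports Defs
begin

text \<open>Take Q in P_s(L) and a basis that is Q-orthonormal and diagonalises L with signs. In its
  coordinates b_L(v,w) is the standard inner product of v with w with some coordinates negated, so
  Cauchy-Schwarz gives b_L(v,w)^2 \<le> Q(v) Q(w), which is at most Q(v) on the horoball Q(w) \<le> 1.
  The bound is attained: for u = v / b_L(v,w) the vectors (u + w)/sqrt 2 and (u - w)/sqrt 2 are
  L-orthogonal with L-values 1 and -1; extending them to a basis in which L is diagonal with signs
  and letting Q be the form for which this basis is orthonormal gives Q(w) = 1 and
  Q(v) = b_L(v,w)^2.\<close>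

lemma qform_bform: "qform L x = bform L x x"
  by (simp add: qform_def bform_def)

lemma bform_sym:
  assumes "symmetric_mat L"
  shows "bform L x y = bform L y x"
proof -
  have "bform L x y = (x v* L) \<bullet> y"
    by (simp add: bform_def dot_lmul_matrix)
  also have "\<dots> = (transpose L *v x) \<bullet> y"
    by simp
  also have "\<dots> = bform L y x"
    using assms by (simp add: bform_def symmetric_mat_def inner_commute)
  finally show ?thesis .
qed

lemma bform_add_left: "bform L (x + y) z = bform L x z + bform L y z"
  by (simp add: bform_def inner_add_left)

lemma bform_add_right: "bform L z (x + y) = bform L z x + bform L z y"
  by (simp add: bform_def matrix_vector_right_distrib inner_add_right)

lemma bform_diff_left: "bform L (x - y) z = bform L x z - bform L y z"
  by (simp add: bform_def inner_diff_left)

lemma bform_diff_right: "bform L z (x - y) = bform L z x - bform L z y"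
  by (simp add: bform_def matrix_vector_mult_diff_distrib inner_diff_right)

lemma bform_scaleR_left: "bform L (c *\<^sub>R x) z = c * bform L x z"
  by (simp add: bform_def)

lemma bform_scaleR_right: "bform L z (c *\<^sub>R x) = c * bform L z x"
  by (simp add: bform_def matrix_vector_mult_scaleR)

lemma bform_zero_left [simp]: "bform L 0 z = 0"
  by (simp add: bform_def)

lemma bform_zero_right [simp]: "bform L z 0 = 0"
  by (simp add: bform_def)

lemma bform_sum_left: "bform L (sum f S) z = (\<Sum>x\<in>S. bform L (f x) z)"
  by (simp add: bform_def inner_sum_left)

lemmas bform_linear = bform_add_left bform_add_right bform_diff_left bform_diff_right
  bform_scaleR_left bform_scaleR_right

lemma bform_change_basis: "bform Q (P *v a) (P *v b) = a \<bullet> ((transpose P ** Q ** P) *v b)"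
proof -
  have "bform Q (P *v a) (P *v b) = (P *v a) \<bullet> ((Q ** P) *v b)"
    by (simp add: bform_def matrix_vector_mul_assoc)
  also have "\<dots> = a \<bullet> (transpose P *v ((Q ** P) *v b))"
    by (metis dot_lmul_matrix transpose_matrix_vector transpose_transpose)
  finally show ?thesis
    by (simp add: matrix_vector_mul_assoc matrix_mul_assoc)
qed

definition nondegenerate_on :: "real^'n^'n \<Rightarrow> (real^'n) set \<Rightarrow> bool" where
  "nondegenerate_on L S \<longleftrightarrow> (\<forall>y\<in>S. (\<forall>z\<in>S. bform L y z = 0) \<longrightarrow> y = 0)"

definition pseudo_orthonormal :: "real^'n^'n \<Rightarrow> (real^'n) set \<Rightarrow> bool" where
  "pseudo_orthonormal L B \<longleftrightarrow>
     (\<forall>x\<in>B. \<forall>y\<in>B. x \<noteq> y \<longrightarrow> bform L x y = 0) \<and> (\<forall>x\<in>B. qform L x \<in> {1, -1})"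

lemma nondegenerate_on_UNIV:
  assumes "nondegenerate_qf L"
  shows "nondegenerate_on L UNIV"
  unfolding nondegenerate_on_def
proof (intro ballI impI)
  fix y assume "\<forall>z\<in>UNIV. bform L y z = 0"
  then have "bform L (L *v y) y = 0"
    using bform_sym assms by (metis UNIV_I nondegenerate_qf_def)
  then have "L *v y = 0"
    by (simp add: bform_def)
  moreover obtain L' where "L' ** L = mat 1"
    using assms invertible_det_nz invertible_def by (metis nondegenerate_qf_def)
  ultimately show "y = 0"
    by (metis matrix_vector_mul_assoc matrix_vector_mul_lid matrix_vector_mult_0_right)
qed

lemma nondegenerate_on_exists_unit:
  assumes "symmetric_mat L" "subspace S" "nondegenerate_on L S" "S \<noteq> {0}"
  shows "\<exists>x\<in>S. qform L x \<in> {1, -1}"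
proof -
  have "\<exists>x\<in>S. qform L x \<noteq> 0"
  proof (rule ccontr)
    assume isotropic: "\<not> (\<exists>x\<in>S. qform L x \<noteq> 0)"
    obtain y where "y \<in> S" "y \<noteq> 0"
      using assms(2,4) subspace_0 by blast
    with assms(3) obtain z where z: "z \<in> S" "bform L y z \<noteq> 0"
      unfolding nondegenerate_on_def by blast
    have "qform L (y + z) = qform L y + 2 * bform L y z + qform L z"
      using bform_sym[OF assms(1), of z y] by (simp add: qform_bform bform_linear)
    then show False
      using isotropic z \<open>y \<in> S\<close> assms(2) subspace_add by fastforce
  qed
  then obtain x where x: "x \<in> S" "qform L x \<noteq> 0"
    by blast
  define c where "c = 1 / sqrt \<bar>qform L x\<bar>"
  have "qform L (c *\<^sub>R x) = qform L x / \<bar>qform L x\<bar>"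
    by (simp add: c_def qform_bform bform_linear power2_eq_square[symmetric])
  then have "qform L (c *\<^sub>R x) \<in> {1, -1}"
    using x(2) by (auto simp: abs_if)
  then show ?thesis
    using x(1) assms(2) subspace_scale by blast
qed

lemma orth_projection_orth:
  assumes "qform L x \<noteq> 0"
  shows "bform L (t - (bform L t x / qform L x) *\<^sub>R x) x = 0"
  using assms by (simp add: bform_linear qform_bform)

lemma orth_projection_mem:
  assumes "subspace S" "x \<in> S" "t \<in> S" "qform L x \<noteq> 0"
  shows "t - (bform L t x / qform L x) *\<^sub>R x \<in> {u \<in> S. bform L u x = 0}"
  using assms orth_projection_orth[OF assms(4)] by (simp add: subspace_diff subspace_scale)

lemma subspace_orth_within:
  assumes "subspace S"
  shows "subspace {u \<in> S. bform L u x = 0}"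
  using assms unfolding subspace_def by (auto simp: bform_linear)

lemma nondegenerate_on_orth_within:
  assumes "symmetric_mat L" "subspace S" "nondegenerate_on L S" "x \<in> S" "qform L x \<noteq> 0"
  shows "nondegenerate_on L {u \<in> S. bform L u x = 0}"
  unfolding nondegenerate_on_def
proof (intro ballI impI)
  fix u assume u: "u \<in> {u \<in> S. bform L u x = 0}"
    and orth: "\<forall>t\<in>{u \<in> S. bform L u x = 0}. bform L u t = 0"
  have "bform L u t = 0" if "t \<in> S" for t
  proof -
    have "bform L u (t - (bform L t x / qform L x) *\<^sub>R x) = 0"
      using orth orth_projection_mem[OF assms(2,4) that assms(5)] by blast
    moreover have "bform L u x = 0"
      using u by simp
    ultimately show ?thesis
      by (simp add: bform_linear)
  qed
  then show "u = 0"
    using assms(3) u unfolding nondegenerate_on_def by blast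
qed

lemma span_insert_orth_within:
  assumes "subspace S" "x \<in> S" "qform L x \<noteq> 0" "{u \<in> S. bform L u x = 0} \<subseteq> span B"
  shows "S \<subseteq> span (insert x B)"
proof
  fix t assume "t \<in> S"
  define c where "c = bform L t x / qform L x"
  have "t - c *\<^sub>R x \<in> span (insert x B)"
    using orth_projection_mem[OF assms(1,2) \<open>t \<in> S\<close> assms(3)] assms(4)
      span_mono[of B "insert x B"] unfolding c_def by blast
  moreover have "c *\<^sub>R x \<in> span (insert x B)"
    by (simp add: span_base span_scale)
  ultimately have "(t - c *\<^sub>R x) + c *\<^sub>R x \<in> span (insert x B)"
    by (rule span_add)
  then show "t \<in> span (insert x B)"
    by simp
qed

lemma pseudo_orthonormal_insert:
  assumes "symmetric_mat L" "pseudo_orthonormal L B" "qform L x \<in> {1, -1}"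
    "\<forall>b\<in>B. bform L b x = 0"
  shows "pseudo_orthonormal L (insert x B)"
  using assms bform_sym[OF assms(1)] unfolding pseudo_orthonormal_def by (metis insert_iff)

text \<open>Taking x from C when C is nonempty makes it L-orthogonal to the rest of C, so that C
  survives when x is split off.\<close>

lemma pseudo_orthonormal_next_vector:
  assumes "symmetric_mat L" "subspace S" "nondegenerate_on L S" "S \<noteq> {0}"
    and "C \<subseteq> S" "pseudo_orthonormal L C"
  obtains x where "x \<in> S" "qform L x \<in> {1, -1}" "\<forall>c\<in>C - {x}. bform L c x = 0"
proof (cases "C = {}")
  case True
  then show ?thesis
    using that nondegenerate_on_exists_unit[OF assms(1-4)] by blast
next
  case False
  then obtain x where "x \<in> C"
    by blast
  then show ?thesis
    using that assms(5,6) unfolding pseudo_orthonormal_def by blast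
qed

lemma pseudo_orthonormal_extend:
  fixes L :: "real^'n^'n"
  assumes "symmetric_mat L"
  shows "subspace S \<Longrightarrow> nondegenerate_on L S \<Longrightarrow> finite C \<Longrightarrow> C \<subseteq> S \<Longrightarrow>
    pseudo_orthonormal L C \<Longrightarrow>
    \<exists>B. finite B \<and> C \<subseteq> B \<and> B \<subseteq> S \<and> S \<subseteq> span B \<and> pseudo_orthonormal L B"
proof (induction "dim S" arbitrary: S C rule: less_induct)
  case less
  show ?case
  proof (cases "S = {0}")
    case True
    moreover have "0 \<notin> C"
      using less.prems(5) by (auto simp: pseudo_orthonormal_def qform_def)
    ultimately have "C = {}"
      using less.prems(4) by blast
    then show ?thesis
      using True by (intro exI[of _ "{}"]) (auto simp: pseudo_orthonormal_def)
  next
    case False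
    obtain x where x: "x \<in> S" "qform L x \<in> {1, -1}" "\<forall>c\<in>C - {x}. bform L c x = 0"
      using pseudo_orthonormal_next_vector[OF assms less.prems(1,2) False less.prems(4,5)] .
    define S' where "S' = {u \<in> S. bform L u x = 0}"
    have x_aniso: "qform L x \<noteq> 0"
      using x(2) by auto
    have S': "subspace S'" "nondegenerate_on L S'"
      unfolding S'_def using subspace_orth_within less.prems(1)
        nondegenerate_on_orth_within[OF assms less.prems(1,2) x(1) x_aniso] by auto
    have "S' \<noteq> S"
      using x(1) x_aniso by (auto simp: S'_def qform_bform)
    then have "dim S' < dim S"
      using subspace_dim_equal[OF S'(1) less.prems(1)] by (force simp: S'_def)
    moreover have "C - {x} \<subseteq> S'" "pseudo_orthonormal L (C - {x})"
      using x(3) less.prems(4,5) by (auto simp: S'_def pseudo_orthonormal_def)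
    ultimately obtain B where B: "finite B" "C - {x} \<subseteq> B" "B \<subseteq> S'" "S' \<subseteq> span B"
      "pseudo_orthonormal L B"
      using less.hyps S' less.prems(3) by (metis finite_Diff)
    show ?thesis
    proof (intro exI conjI)
      show "pseudo_orthonormal L (insert x B)"
        using pseudo_orthonormal_insert[OF assms B(5) x(2)] B(3) by (auto simp: S'_def)
      show "S \<subseteq> span (insert x B)"
        using span_insert_orth_within[OF less.prems(1) x(1) x_aniso] B(4) by (simp add: S'_def)
    qed (use B x(1) in \<open>auto simp: S'_def\<close>)
  qed
qed

definition sign_diagonal :: "real^'n^'n \<Rightarrow> bool" where
  "sign_diagonal D \<longleftrightarrow> (\<forall>i j. i \<noteq> j \<longrightarrow> D $ i $ j = 0) \<and> (\<forall>i. D $ i $ i \<in> {1, -1})"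

lemma Ps_iff:
  "Q \<in> Ps L \<longleftrightarrow> pos_def_qf Q \<and>
     (\<exists>P::real^'n^'n. invertible P \<and> transpose P ** Q ** P = mat 1 \<and> sign_diagonal (transpose P ** L ** P))"
proof -
  have diagonal_iff: "(\<forall>i j. M $ i $ j = (if i = j then M $ i $ i else 0)) \<longleftrightarrow>
      (\<forall>i j. i \<noteq> j \<longrightarrow> M $ i $ j = 0)" for M :: "real^'n^'n"
    by metis
  show ?thesis
    unfolding Ps_def mem_Collect_eq diagonal_iff sign_diagonal_def by (rule refl)
qed

lemma sign_diagonal_off_diag:
  assumes "sign_diagonal D" "i \<noteq> j"
  shows "D $ i $ j = 0"
  using assms unfolding sign_diagonal_def by blast

lemma sign_diagonal_diag_square:
  assumes "sign_diagonal D"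
  shows "D $ i $ i * D $ i $ i = 1"
proof -
  have "D $ i $ i \<in> {1, -1}"
    using assms unfolding sign_diagonal_def by blast
  then show ?thesis
    by auto
qed

lemma sign_diagonal_mult_self:
  assumes "sign_diagonal D"
  shows "D ** D = mat 1"
proof -
  have "(D ** D) $ i $ j = D $ i $ i * D $ i $ j" for i j
  proof -
    have "(\<Sum>k\<in>UNIV - {i}. D $ i $ k * D $ k $ j) = 0"
      by (intro sum.neutral) (simp add: sign_diagonal_off_diag[OF assms])
    then show ?thesis
      by (simp add: matrix_matrix_mult_def sum.remove[of UNIV i])
  qed
  then show ?thesis
    by (simp add: vec_eq_iff mat_def sign_diagonal_diag_square[OF assms]
        sign_diagonal_off_diag[OF assms])
qed

lemma sign_diagonal_transpose:
  assumes "sign_diagonal D"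
  shows "transpose D = D"
  by (simp add: vec_eq_iff transpose_def) (metis sign_diagonal_off_diag[OF assms])

lemma bform_mat_1: "bform (mat 1) x y = x \<bullet> y"
  by (simp add: bform_def)

lemma qform_Ps_pos:
  assumes "Q \<in> Ps L" "x \<noteq> 0"
  shows "qform Q x > 0"
  using assms by (simp add: Ps_def pos_def_qf_def)

lemma bform_square_le_qform_mult:
  fixes L Q :: "real^'n^'n"
  assumes "Q \<in> Ps L"
  shows "(bform L v w)\<^sup>2 \<le> qform Q v * qform Q w"
proof -
  obtain P :: "real^'n^'n" where P: "invertible P" "transpose P ** Q ** P = mat 1"
    and D: "sign_diagonal (transpose P ** L ** P)"
    using assms by (auto simp: Ps_iff)
  define D where "D = transpose P ** L ** P"
  obtain P' where P': "P ** P' = mat 1"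
    using P(1) invertible_def by blast
  define a where "a = P' *v v"
  define b where "b = P' *v w"
  have v: "v = P *v a" and w: "w = P *v b"
    using P' by (simp_all add: a_def b_def matrix_vector_mul_assoc)
  have "(D *v b) \<bullet> (D *v b) = b \<bullet> b"
    using bform_change_basis[of "mat 1" D b b] sign_diagonal_mult_self[OF D]
      sign_diagonal_transpose[OF D] by (simp add: bform_mat_1 D_def)
  moreover have "qform Q v = a \<bullet> a" "qform Q w = b \<bullet> b" "bform L v w = a \<bullet> (D *v b)"
    using P(2) by (simp_all add: v w qform_bform bform_change_basis D_def)
  ultimately show ?thesis
    using Cauchy_Schwarz_ineq[of a "D *v b"] by simp
qed

lemma pos_def_qf_transpose_mult_self:
  fixes A :: "real^'n^'n"
  assumes "invertible A"
  shows "pos_def_qf (transpose A ** A)"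
  unfolding pos_def_qf_def
proof (intro conjI allI impI)
  show "symmetric_mat (transpose A ** A)"
    by (simp add: symmetric_mat_def matrix_transpose_mul)
  fix x :: "real^'n" assume "x \<noteq> 0"
  then have "A *v x \<noteq> 0"
    using assms invertible_left_inverse matrix_left_invertible_ker by metis
  moreover have "qform (transpose A ** A) x = (A *v x) \<bullet> (A *v x)"
    using bform_change_basis[of "mat 1" A x x] by (simp add: bform_mat_1 qform_def)
  ultimately show "qform (transpose A ** A) x > 0"
    by simp
qed

lemma exists_Ps_orthonormal_columns:
  fixes L P :: "real^'n^'n"
  assumes "invertible P" "sign_diagonal (transpose P ** L ** P)"
  shows "\<exists>Q\<in>Ps L. \<forall>a b. bform Q (P *v a) (P *v b) = a \<bullet> b"
proof -
  obtain P' where P': "P ** P' = mat 1" "P' ** P = mat 1"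
    using assms(1) invertible_def by blast
  define Q where "Q = transpose P' ** P'"
  have "transpose P ** Q ** P = transpose (P' ** P) ** (P' ** P)"
    by (simp add: Q_def matrix_mul_assoc matrix_transpose_mul)
  then have QP: "transpose P ** Q ** P = mat 1"
    using P'(2) by simp
  moreover have "pos_def_qf Q"
    unfolding Q_def using P' by (intro pos_def_qf_transpose_mult_self) (auto simp: invertible_def)
  ultimately have "Q \<in> Ps L"
    using assms by (auto simp: Ps_iff)
  moreover have "bform Q (P *v a) (P *v b) = a \<bullet> b" for a b
    by (simp add: bform_change_basis QP)
  ultimately show ?thesis
    by blast
qed

lemma pseudo_orthonormal_independent:
  fixes L :: "real^'n^'n"
  assumes "finite B" "pseudo_orthonormal L B"
  shows "independent B"
  unfolding independent_explicit
proof (intro conjI allI impI ballI)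
  show "finite B" by fact
  fix c :: "real^'n \<Rightarrow> real" and x assume comb: "(\<Sum>v\<in>B. c v *\<^sub>R v) = 0" and x: "x \<in> B"
  have "0 = bform L (\<Sum>v\<in>B. c v *\<^sub>R v) x"
    using comb by simp
  also have "\<dots> = c x * bform L x x + (\<Sum>v\<in>B - {x}. c v * bform L v x)"
    using assms(1) x by (simp add: bform_sum_left bform_linear sum.remove)
  also have "(\<Sum>v\<in>B - {x}. c v * bform L v x) = 0"
    using assms(2) x by (intro sum.neutral) (auto simp: pseudo_orthonormal_def)
  finally show "c x = 0"
    using assms(2) x by (auto simp: pseudo_orthonormal_def qform_bform)
qed

lemma exists_Ps_orthonormal_on:
  fixes L :: "real^'n^'n"
  assumes "finite B" "pseudo_orthonormal L B" "UNIV \<subseteq> span B"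
  shows "\<exists>Q\<in>Ps L. \<forall>x\<in>B. \<forall>y\<in>B. bform Q x y = (if x = y then 1 else 0)"
proof -
  have "card B = CARD('n)"
    using basis_card_eq_dim[OF subset_UNIV assms(3) pseudo_orthonormal_independent[OF assms(1,2)]]
    by simp
  then obtain f where f: "bij_betw f (UNIV :: 'n set) B"
    using finite_same_card_bij[of "UNIV :: 'n set" B] assms(1) by auto
  define P :: "real^'n^'n" where "P = (\<chi> i j. f j $ i)"
  define D where "D = transpose P ** L ** P"
  have P_axis: "P *v axis j 1 = f j" for j
    by (simp add: matrix_vector_mult_basis P_def column_def)
  have "D $ i $ j = axis i 1 \<bullet> (D *v axis j 1)" for i j
    by (simp add: matrix_vector_mult_basis inner_axis' column_def)
  then have D_entry: "D $ i $ j = bform L (f i) (f j)" for i j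
    by (simp add: D_def bform_change_basis flip: P_axis)
  have "sign_diagonal D"
    using assms(2) f unfolding sign_diagonal_def pseudo_orthonormal_def D_entry
    by (auto simp: bij_betw_def inj_eq qform_bform)
  have "(D ** transpose P ** L) ** P = D ** D"
    by (simp add: D_def matrix_mul_assoc)
  then have "(D ** transpose P ** L) ** P = mat 1"
    using sign_diagonal_mult_self[OF \<open>sign_diagonal D\<close>] by simp
  then have "invertible P"
    using invertible_left_inverse by blast
  then obtain Q where Q: "Q \<in> Ps L" "\<forall>a b. bform Q (P *v a) (P *v b) = a \<bullet> b"
    using exists_Ps_orthonormal_columns \<open>sign_diagonal D\<close> unfolding D_def by blast
  have "inj f" "range f = B"
    using f by (simp_all add: bij_betw_def)
  have "bform Q x y = (if x = y then 1 else 0)" if xy: "x \<in> B" "y \<in> B" for x y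
  proof -
    obtain i j where "x = f i" "y = f j"
      using xy \<open>range f = B\<close> by blast
    then show ?thesis
      using Q(2)[rule_format, of "axis i 1" "axis j 1"] \<open>inj f\<close>
      by (simp add: P_axis inner_axis_axis inj_eq)
  qed
  then show ?thesis
    using Q(1) by blast
qed

lemma half_sum_diff:
  fixes x y :: "'a::real_vector"
  shows "(1 / 2) *\<^sub>R ((x + y) + (x - y)) = x" "(1 / 2) *\<^sub>R ((x + y) - (x - y)) = y"
proof -
  have "(x + y) + (x - y) = 2 *\<^sub>R x" "(x + y) - (x - y) = 2 *\<^sub>R y"
    by (simp_all add: scaleR_2)
  then show "(1 / 2) *\<^sub>R ((x + y) + (x - y)) = x" "(1 / 2) *\<^sub>R ((x + y) - (x - y)) = y"
    by simp_all
qed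

lemma exists_Ps_qform_eq:
  fixes L :: "real^'n^'n" and v w :: "real^'n"
  assumes L: "nondegenerate_qf L" and "v \<in> Con L" "w \<in> Con L" and vw: "bform L v w \<noteq> 0"
  shows "\<exists>Q\<in>Ps L. qform Q w = 1 \<and> qform Q v = (bform L v w)\<^sup>2"
proof -
  have sym: "symmetric_mat L"
    using L by (simp add: nondegenerate_qf_def)
  define \<beta> where "\<beta> = bform L v w"
  define u where "u = (1 / \<beta>) *\<^sub>R v"
  define s :: real where "s = 1 / sqrt 2"
  have s: "s * s = 1 / 2" "s * 2 * s = 1"
    by (simp_all add: s_def)
  define p1 where "p1 = s *\<^sub>R (u + w)"
  define p2 where "p2 = s *\<^sub>R (u - w)"
  have "bform L u u = 0" "bform L w w = 0" "bform L u w = 1" "bform L w u = 1"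
    using assms bform_sym[OF sym, of w u]
    by (simp_all add: u_def \<beta>_def Con_def qform_bform bform_linear)
  then have L_p: "qform L p1 = 1" "qform L p2 = -1" "bform L p1 p2 = 0" "bform L p2 p1 = 0"
    by (simp_all add: p1_def p2_def qform_bform bform_linear mult.assoc[symmetric] s)
  then have "pseudo_orthonormal L {p1, p2}"
    by (auto simp: pseudo_orthonormal_def)
  then obtain B where B: "finite B" "{p1, p2} \<subseteq> B" "UNIV \<subseteq> span B" "pseudo_orthonormal L B"
    using pseudo_orthonormal_extend[OF sym subspace_UNIV nondegenerate_on_UNIV[OF L], of "{p1, p2}"]
    by auto
  have "p1 \<noteq> p2"
    using L_p by auto
  then obtain Q where "Q \<in> Ps L"
    and Q_p: "bform Q p1 p1 = 1" "bform Q p2 p2 = 1" "bform Q p1 p2 = 0" "bform Q p2 p1 = 0"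
    using exists_Ps_orthonormal_on[OF B(1,4,3)] B(2) by force
  have "s *\<^sub>R (p1 - p2) = (1 / 2) *\<^sub>R ((u + w) - (u - w))"
    "s *\<^sub>R (p1 + p2) = (1 / 2) *\<^sub>R ((u + w) + (u - w))"
    by (simp_all only: p1_def p2_def scaleR_add_right scaleR_diff_right scaleR_scaleR s(1))
  then have "w = s *\<^sub>R (p1 - p2)" "v = \<beta> *\<^sub>R s *\<^sub>R (p1 + p2)"
    using vw by (simp_all add: half_sum_diff u_def \<beta>_def)
  then have "qform Q w = 1" "qform Q v = \<beta>\<^sup>2"
    by (simp_all add: qform_bform bform_linear Q_p mult.assoc[symmetric] s power2_eq_square)
  then show ?thesis
    using \<open>Q \<in> Ps L\<close> \<beta>_def by blast
qed

lemma horoball_eq_qform_le_1: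
  assumes "w \<noteq> 0"
  shows "horoball L w = {Q \<in> Ps L. qform Q w \<le> 1}"
proof -
  have "busemann w Q \<le> 0 \<longleftrightarrow> qform Q w \<le> 1" if "Q \<in> Ps L" for Q
    using qform_Ps_pos[OF that assms] by (simp add: busemann_def mult_le_0_iff)
  then show ?thesis
    unfolding horoball_def by blast
qed

lemma INF_ln_qform_eq:
  fixes L :: "real^'n^'n" and v w :: "real^'n"
  assumes "nondegenerate_qf L" "v \<in> Con L" "w \<in> Con L" and vw: "bform L v w \<noteq> 0"
  shows "(INF Q\<in>{Q \<in> Ps L. qform Q w \<le> 1}. sqrt 2 * ln (qform Q v))
    = 2 * sqrt 2 * ln \<bar>bform L v w\<bar>"
proof (rule cInf_eq_minimum)
  have ln_square: "ln ((bform L v w)\<^sup>2) = 2 * ln \<bar>bform L v w\<bar>"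
    using ln_realpow[of "\<bar>bform L v w\<bar>" 2] vw by simp
  obtain Q where "Q \<in> Ps L" "qform Q w = 1" "qform Q v = (bform L v w)\<^sup>2"
    using exists_Ps_qform_eq[OF assms] by blast
  then show "2 * sqrt 2 * ln \<bar>bform L v w\<bar>
      \<in> (\<lambda>Q. sqrt 2 * ln (qform Q v)) ` {Q \<in> Ps L. qform Q w \<le> 1}"
    using ln_square by (intro image_eqI[of _ _ Q]) auto
  fix y assume "y \<in> (\<lambda>Q. sqrt 2 * ln (qform Q v)) ` {Q \<in> Ps L. qform Q w \<le> 1}"
  then obtain Q where Q: "Q \<in> Ps L" "qform Q w \<le> 1" and y: "y = sqrt 2 * ln (qform Q v)"
    by blast
  have "v \<noteq> 0"
    using vw by auto
  then have "qform Q v > 0"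
    using qform_Ps_pos[OF Q(1)] by blast
  have "(bform L v w)\<^sup>2 \<le> qform Q v * qform Q w"
    using bform_square_le_qform_mult[OF Q(1)] .
  also have "\<dots> \<le> qform Q v"
    using \<open>qform Q v > 0\<close> Q(2) by (simp add: mult_left_le)
  finally have "ln ((bform L v w)\<^sup>2) \<le> ln (qform Q v)"
    using vw \<open>qform Q v > 0\<close> by simp
  then show "2 * sqrt 2 * ln \<bar>bform L v w\<bar> \<le> y"
    using ln_square y by simp
qed

theorem lemma3p14:
  fixes L :: "real^'n^'n" and v w :: "real^'n"
  assumes "nondegenerate_qf L"
    and "v \<in> Con L" and "w \<in> Con L"
    and "bform L v w \<noteq> 0"
  shows "oriented_dist L v w = 2 * sqrt 2 * ln \<bar>bform L v w\<bar> \<and>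
         (INF Q\<in>{Q \<in> Ps L. qform Q w \<le> 1}. sqrt 2 * ln (qform Q v))
           = 2 * sqrt 2 * ln \<bar>bform L v w\<bar>"
proof -
  have "w \<noteq> 0"
    using assms(4) by auto
  then have "oriented_dist L v w = (INF Q\<in>{Q \<in> Ps L. qform Q w \<le> 1}. sqrt 2 * ln (qform Q v))"
    by (simp add: oriented_dist_def horoball_eq_qform_le_1 busemann_def)
  then show ?thesis
    using INF_ln_qform_eq[OF assms] by simp
qed

end
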